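(* Let $h_0\in C^1([1,\infty),\mathbb{R}^+)$ with $h_0'\ge0$, $t^{-2}h_0(t)\in L^1([1,\infty))$ and $t^{-1}h_0'(t)\in L^1([1,\infty))$. Define $$h(t)=\int_1^\infty (t\vee t_1)^{-1}h_0'(t_1)\,dt_1,\quad N_m(t)=\int_1^t h_0'(t_1)h^m(t_1)\,dt_1,\quad Q_m(t)=\int_1^\infty (t\vee t_1)^{-1}h_0'(t_1)h^m(t_1)\,dt_1,$$ $Q_{-1}=1$, and, when $\int_1^\infty h_0'(t_1)h^{m+1}(t_1)dt_1<\infty$ (condition ( * )$_m$), $P_m(t)=\int_1^\infty h(t\vee t_1)h_0'(t_1)h^m(t_1)\,dt_1$. Let $i,j,m$ be nonnegative integers, $1\le a\le b$ and $t\ge1$. Then: $\int_t^\infty t_1^{-2}N_m(t_1)dt_1=Q_m(t)$; $\int_1^t t_1^{-2}N_0(t_1)N_m(t_1)dt_1=N_{m+1}(t)-h(t)N_m(t)\le N_{m+1}(t)$; $\int_t^\infty t_1^{-2}N_0(t_1)N_m(t_1)dt_1=P_m(t)$ if ( * )$_m$ holds; $N_i(t)N_j(t)\le N_0(t)N_{i+j}(t)$; $N_i(t)Q_j(t)\le h(t)N_{i+j}(t)\le N_{i+j+1}(t)$; $Q_i(t)Q_j(t)\le h(t)Q_{i+j}(t)\le 2Q_{i+j+1}(t)$; $\int_t^\infty h_0'(t_1)h(t_1)Q_{m-1}(t_1)dt_1\le\int_t^\infty h_0'(t_1)Q_m(t_1)dt_1$; $\int_t^\infty h_0'(t_1)Q_m(t_1)dt_1\le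 P_m(t)$ if ( * )$_m$ holds; $\int_1^t h_0'(t_1)h(t_1)Q_{m-1}(t_1)dt_1\le N_{m+1}(t)$; $\int_1^t h_0'(t_1)Q_m(t_1)dt_1\le N_{m+1}(t)$; $\int_a^b h_0'(t)Q_m(t)dt\le Q_m(a)(h_0(b)-h_0(a))$; $\int_a^b h_0'(t)h(t)Q_{m-1}(t)dt\le 2Q_m(a)(h_0(b)-h_0(a))$.
   Context: $a\vee b=\max(a,b)$. *)

theory Defs
  imports "HOL-Analysis.Analysis"
begin

text \<open>Here d plays the role of the derivative h0' of h0 on [1,oo).
  Integrals over unbounded ranges are nonnegative Lebesgue integrals (values in [0,oo]);
  the auxiliary functions h, Q_m, P_m are the real values of those integrals.\<close>

definition hh :: "(real \<Rightarrow> real) \<Rightarrow> real \<Rightarrow> real" where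
  "hh d t = enn2real (\<integral>\<^sup>+ s\<in>{1..}. ennreal (d s / max t s) \<partial>lborel)"

definition NN :: "(real \<Rightarrow> real) \<Rightarrow> nat \<Rightarrow> real \<Rightarrow> real" where
  "NN d m t = (LBINT s:{1..t}. d s * hh d s ^ m)"

text \<open>Q_k for k \<ge> 0; Q_{-1} = 1 (negative indices are only used for k = -1).\<close>
definition QQ :: "(real \<Rightarrow> real) \<Rightarrow> int \<Rightarrow> real \<Rightarrow> real" where
  "QQ d k t = (if k < 0 then 1
      else enn2real (\<integral>\<^sup>+ s\<in>{1..}. ennreal (d s * hh d s ^ nat k / max t s) \<partial>lborel))"

definition cond_star :: "(real \<Rightarrow> real) \<Rightarrow> nat \<Rightarrow> bool" where
  "cond_star d m \<longleftrightarrow> (\<integral>\<^sup>+ s\<in>{1..}. ennreal (d s * hh d s ^ Suc m) \<partial>lborel) < \<infinity>"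

definition PP :: "(real \<Rightarrow> real) \<Rightarrow> nat \<Rightarrow> real \<Rightarrow> real" where
  "PP d m t = enn2real (\<integral>\<^sup>+ s\<in>{1..}. ennreal (hh d (max t s) * d s * hh d s ^ m) \<partial>lborel)"

end

theory Submission
  imports Defs
begin

text \<open>Two mechanisms drive all the estimates. First, Tonelli's theorem together with
  \<open>\<integral>\<^sub>t\<^sup>\<infinity> r\<^sup>-\<^sup>2 [u \<le> r] dr = 1 / (t \<or> u)\<close> turns integrals of \<open>N\<^sub>m(r) / r\<^sup>2\<close> into the
  kernel integrals \<open>Q\<^sub>m\<close>: \<open>\<integral>\<^sub>t\<^sup>\<infinity> N\<^sub>m / r\<^sup>2 = Q\<^sub>m(t)\<close> and \<open>h(u) - h(t) = \<integral>\<^sub>u\<^sup>t N\<^sub>0 / r\<^sup>2\<close>.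
  Second, \<open>h\<close> is nonincreasing: \<open>h(s) \<ge> h(t)\<close> in the integral defining \<open>N\<^sub>m(t)\<close> and
  \<open>h(s) \<le> h(t)\<close> in the part \<open>s > t\<close> of \<open>Q\<^sub>m(t)\<close>, while Chebyshev's inequality for the
  similarly ordered \<open>h\<^sup>i, h\<^sup>j\<close> gives \<open>N\<^sub>i N\<^sub>j \<le> N\<^sub>0 N\<^sub>i\<^sub>+\<^sub>j\<close> and \<open>Q\<^sub>i Q\<^sub>j \<le> Q\<^sub>0 Q\<^sub>i\<^sub>+\<^sub>j\<close>.
  The integrals of \<open>h0' Q\<^sub>m\<close> are reduced by Tonelli to integrals of \<open>N\<^sub>m / r\<^sup>2\<close> again,
  where these product inequalities compare the integrands pointwise.\<close>

lemma nn_integral_inverse_square_atLeast: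
  fixes x :: real
  assumes "0 < x"
  shows "(\<integral>\<^sup>+ r\<in>{x..}. ennreal (1 / r\<^sup>2) \<partial>lborel) = ennreal (1 / x)"
proof (rule nn_integral_has_integral_lebesgue')
  have "((\<lambda>r. r powr (-2)) has_integral -(x powr (-2+1)) / (-2+1)) {x..}"
    by (rule has_integral_powr_to_inf) (use assms in auto)
  moreover have "-(x powr (-2+1)) / (-2+1) = 1 / x"
    using assms by (simp add: powr_minus_divide)
  moreover have "r powr (-2) = 1 / r\<^sup>2" if "r \<in> {x..}" for r
    using that assms by (simp add: powr_minus powr_numeral divide_inverse)
  ultimately show "((\<lambda>r. 1 / r\<^sup>2) has_integral 1 / x) {x..}"
    using has_integral_cong by (metis (no_types, lifting))
qed simp

lemma nn_integral_cong_except_point: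
  fixes F G :: "real \<Rightarrow> real"
  assumes "\<And>r. r \<noteq> c \<Longrightarrow> F r = G r"
  shows "(\<integral>\<^sup>+ r. ennreal (F r) \<partial>lborel) = (\<integral>\<^sup>+ r. ennreal (G r) \<partial>lborel)"
proof (rule nn_integral_cong_AE)
  show "AE r in lborel. ennreal (F r) = ennreal (G r)"
    using AE_lborel_singleton[of c] by eventually_elim (use assms in auto)
qed

lemma ennreal_eq_add_ennreal_iff_diff:
  assumes "ennreal a = x + ennreal b" "0 \<le> b"
  shows "x = ennreal (a - b)"
  using assms by (metis ennreal_add_diff_cancel_right ennreal_minus top_neq_ennreal)

lemma nn_integral_swap_triangle:
  fixes f g :: "real \<Rightarrow> real"
  assumes [measurable]: "f \<in> borel_measurable borel" "g \<in> borel_measurable borel"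
    and nonneg: "\<And>x. 0 \<le> f x" "\<And>x. 0 \<le> g x"
  shows "(\<integral>\<^sup>+ s. ennreal (g s) * (\<integral>\<^sup>+ u. ennreal (f u * indicator {..s} u) \<partial>lborel) \<partial>lborel)
       = (\<integral>\<^sup>+ u. ennreal (f u) * (\<integral>\<^sup>+ s. ennreal (g s * indicator {u..} s) \<partial>lborel) \<partial>lborel)"
proof -
  have product: "ennreal (f u * g s * (if u \<le> s then 1 else 0))
      = ennreal (g s) * ennreal (f u * indicator {..s} u)"
      "ennreal (f u * g s * (if u \<le> s then 1 else 0))
      = ennreal (f u) * ennreal (g s * indicator {u..} s)" for u s
    using nonneg by (auto simp: indicator_def ennreal_mult[symmetric] mult_ac)
  have "(\<integral>\<^sup>+ s. ennreal (g s) * (\<integral>\<^sup>+ u. ennreal (f u * indicator {..s} u) \<partial>lborel) \<partial>lborel)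
      = (\<integral>\<^sup>+ s. (\<integral>\<^sup>+ u. ennreal (f u * g s * (if u \<le> s then 1 else 0)) \<partial>lborel) \<partial>lborel)"
    by (simp add: product(1) nn_integral_cmult)
  also have "\<dots> = (\<integral>\<^sup>+ u. (\<integral>\<^sup>+ s. ennreal (f u * g s * (if u \<le> s then 1 else 0)) \<partial>lborel) \<partial>lborel)"
    by (rule lborel_pair.Fubini') simp
  also have "\<dots> = (\<integral>\<^sup>+ u. ennreal (f u) * (\<integral>\<^sup>+ s. ennreal (g s * indicator {u..} s) \<partial>lborel) \<partial>lborel)"
    by (simp add: product(2) nn_integral_cmult)
  finally show ?thesis .
qed

lemma power_diff_mult_power_diff_nonneg:
  fixes x c :: "'a::linordered_idom"
  assumes "0 \<le> x" "0 \<le> c"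
  shows "0 \<le> (x ^ i - c ^ i) * (x ^ j - c ^ j)"
proof (cases "x \<le> c")
  case True
  then have "x ^ i \<le> c ^ i" "x ^ j \<le> c ^ j" using assms by (auto intro: power_mono)
  then show ?thesis by (simp add: mult_nonpos_nonpos)
next
  case False
  then have "c ^ i \<le> x ^ i" "c ^ j \<le> x ^ j" using assms by (auto intro: power_mono)
  then show ?thesis by simp
qed

lemma integrable_mult_power_bounded:
  fixes f g :: "'a \<Rightarrow> real"
  assumes "integrable M f" "g \<in> borel_measurable M" "\<And>x. 0 \<le> g x" "\<And>x. g x \<le> C"
  shows "integrable M (\<lambda>x. f x * g x ^ k)"
proof (rule Bochner_Integration.integrable_bound)
  show "integrable M (\<lambda>x. C ^ k * f x)" using assms(1) by simp
  have "\<bar>g x\<bar> ^ k \<le> \<bar>C\<bar> ^ k" for x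
    using assms(3,4)[of x] by (intro power_mono) auto
  then show "AE x in M. norm (f x * g x ^ k) \<le> norm (C ^ k * f x)"
    by (intro AE_I2) (simp add: abs_mult power_abs mult_left_mono mult.commute)
qed (use assms in simp)

text \<open>The proof integrates \<open>(g\<^sup>i - c\<^sup>i)(g\<^sup>j - c\<^sup>j) \<ge> 0\<close> against \<open>f\<close>, where \<open>c\<^sup>i\<close> is the
  \<open>f\<close>-average of \<open>g\<^sup>i\<close>.\<close>
lemma integral_power_mult_integral_power_le:
  fixes f g :: "'a \<Rightarrow> real"
  assumes [measurable]: "g \<in> borel_measurable M"
    and f_nonneg: "\<And>x. 0 \<le> f x" and g_nonneg: "\<And>x. 0 \<le> g x" and g_bounded: "\<And>x. g x \<le> C"
    and f_integrable: "integrable M f"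
  shows "(\<integral> x. f x * g x ^ i \<partial>M) * (\<integral> x. f x * g x ^ j \<partial>M)
         \<le> (\<integral> x. f x \<partial>M) * (\<integral> x. f x * g x ^ (i + j) \<partial>M)"
proof -
  have integrable: "integrable M (\<lambda>x. f x * g x ^ k)" for k
    using f_integrable by (rule integrable_mult_power_bounded) (use g_nonneg g_bounded in auto)
  define moment where "moment k = (\<integral> x. f x * g x ^ k \<partial>M)" for k
  have moment_0: "moment 0 = (\<integral> x. f x \<partial>M)" by (simp add: moment_def)
  have moment_nonneg: "0 \<le> moment k" for k
    unfolding moment_def by (rule Bochner_Integration.integral_nonneg) (simp add: f_nonneg g_nonneg)
  show ?thesis
  proof (cases "i = 0 \<or> moment 0 = 0")
    case True
    then show ?thesis
    proof
      assume "moment 0 = 0"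
      then have "AE x in M. f x = 0"
        using f_integrable f_nonneg unfolding moment_0 by (subst (asm) integral_nonneg_eq_0_iff_AE) auto
      then have "moment i = 0"
        unfolding moment_def by (intro integral_eq_zero_AE) (auto elim: eventually_mono)
      then show ?thesis using moment_nonneg[of 0] moment_nonneg[of "i + j"] unfolding moment_def by simp
    qed simp
  next
    case False
    then have "0 < i" and moment_0_pos: "0 < moment 0" using moment_nonneg[of 0] by auto
    define c where "c = root i (moment i / moment 0)"
    have c_nonneg: "0 \<le> c"
      unfolding c_def by (intro real_root_ge_zero divide_nonneg_pos moment_nonneg moment_0_pos)
    have c_power: "c ^ i = moment i / moment 0"
      unfolding c_def using moment_nonneg moment_0_pos \<open>0 < i\<close> by (simp add: real_root_pow_pos2)
    have "0 \<le> (\<integral> x. f x * ((g x ^ i - c ^ i) * (g x ^ j - c ^ j)) \<partial>M)"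
      by (rule Bochner_Integration.integral_nonneg)
        (simp add: f_nonneg g_nonneg c_nonneg power_diff_mult_power_diff_nonneg)
    also have "(\<integral> x. f x * ((g x ^ i - c ^ i) * (g x ^ j - c ^ j)) \<partial>M)
        = (\<integral> x. f x * g x ^ (i + j) - c ^ j * (f x * g x ^ i) - c ^ i * (f x * g x ^ j)
              + c ^ (i + j) * (f x * g x ^ 0) \<partial>M)"
      by (rule Bochner_Integration.integral_cong) (auto simp: algebra_simps power_add)
    also have "\<dots> = moment (i + j) - c ^ j * moment i - c ^ i * moment j + c ^ (i + j) * moment 0"
      unfolding moment_def using integrable
      by (simp add: Bochner_Integration.integral_diff Bochner_Integration.integral_add del: power_0)
    finally have "0 \<le> moment 0 * (moment (i + j) - c ^ j * moment i - c ^ i * moment j + c ^ (i + j) * moment 0)"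
      using moment_0_pos by simp
    also have "\<dots> = moment 0 * moment (i + j) - moment i * moment j"
      using moment_0_pos by (simp add: algebra_simps power_add c_power)
    finally show ?thesis unfolding moment_def moment_0[symmetric] by simp
  qed
qed

lemma set_integral_derivative_Icc:
  fixes f f' :: "real \<Rightarrow> real"
  assumes deriv: "\<And>x. x \<in> S \<Longrightarrow> (f has_real_derivative f' x) (at x within S)"
    and cont: "continuous_on S f'" and "{a..b} \<subseteq> S" "a \<le> b"
  shows "(LBINT s:{a..b}. f' s) = f b - f a"
proof -
  have "(LBINT s=a..b. f' s) = f b - f a"
  proof (rule interval_integral_FTC_finite)
    show "continuous_on {min a b..max a b} f'"
      by (rule continuous_on_subset[OF cont]) (use assms in auto)
    fix x assume "min a b \<le> x" "x \<le> max a b"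
    then have "x \<in> {a..b}" using assms by auto
    then have "(f has_real_derivative f' x) (at x within {a..b})"
      using deriv assms by (blast intro: DERIV_subset)
    then show "(f has_vector_derivative f' x) (at x within {min a b..max a b})"
      using assms by (simp add: has_real_derivative_iff_has_vector_derivative)
  qed
  then show ?thesis using interval_integral_Icc[OF \<open>a \<le> b\<close>, of f'] by simp
qed

locale ray_weight =
  fixes d :: "real \<Rightarrow> real"
  assumes nonneg: "\<And>x. 1 \<le> x \<Longrightarrow> 0 \<le> d x"
    and set_integrable_d_div: "set_integrable lborel {1..} (\<lambda>x. d x / x)"
begin

abbreviation h :: "real \<Rightarrow> real" where "h \<equiv> hh d"
abbreviation N :: "nat \<Rightarrow> real \<Rightarrow> real" where "N \<equiv> NN d"
abbreviation Q :: "nat \<Rightarrow> real \<Rightarrow> real" where "Q k \<equiv> QQ d (int k)"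

definition D :: "real \<Rightarrow> real" where "D x = indicator {1..} x * d x"

lemma D_measurable[measurable]: "D \<in> borel_measurable borel"
proof -
  have "(\<lambda>x. indicator {1..} x *\<^sub>R (d x / x)) \<in> borel_measurable borel"
    using borel_measurable_integrable set_integrable_d_div unfolding set_integrable_def by simp
  then have "(\<lambda>x. (indicator {1..} x *\<^sub>R (d x / x)) * x) \<in> borel_measurable borel"
    by measurable
  also have "(\<lambda>x. (indicator {1..} x *\<^sub>R (d x / x)) * x) = D"
    by (auto simp: D_def indicator_def fun_eq_iff)
  finally show ?thesis .
qed

lemma D_nonneg: "0 \<le> D x"
  by (auto simp: D_def indicator_def nonneg)

lemma D_eq_0_below_1: "x < 1 \<Longrightarrow> D x = 0"
  by (auto simp: D_def indicator_def)

lemma D_nonzero_ge_1: "D x \<noteq> 0 \<Longrightarrow> 1 \<le> x"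
  by (auto simp: D_def indicator_def split: if_splits)

lemma nn_integral_D_div_finite: "(\<integral>\<^sup>+ x. ennreal (D x / x) \<partial>lborel) < \<infinity>"
proof -
  have "(\<integral>\<^sup>+ x. ennreal (indicator {1..} x *\<^sub>R (d x / x)) \<partial>lborel) < \<infinity>"
    using integrableD(2)[OF set_integrable_d_div[unfolded set_integrable_def]] by (simp add: less_top)
  also have "(\<lambda>x. ennreal (indicator {1..} x *\<^sub>R (d x / x))) = (\<lambda>x. ennreal (D x / x))"
    by (auto simp: D_def indicator_def fun_eq_iff nonneg)
  finally show ?thesis .
qed

lemma nn_integral_finite_if_dominated:
  assumes "\<And>s. 0 \<le> f s" "\<And>s. D s \<noteq> 0 \<Longrightarrow> f s \<le> C * (D s / s)" "\<And>s. D s = 0 \<Longrightarrow> f s = 0"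
  shows "(\<integral>\<^sup>+ s. ennreal (f s) \<partial>lborel) < \<infinity>"
proof -
  have "(\<integral>\<^sup>+ s. ennreal (f s) \<partial>lborel) \<le> (\<integral>\<^sup>+ s. ennreal (max 0 C) * ennreal (D s / s) \<partial>lborel)"
  proof (rule nn_integral_mono)
    fix s
    show "ennreal (f s) \<le> ennreal (max 0 C) * ennreal (D s / s)"
    proof (cases "D s = 0")
      case False
      then have "1 \<le> s" by (rule D_nonzero_ge_1)
      then have "0 \<le> D s / s" using D_nonneg[of s] by simp
      then have "f s \<le> max 0 C * (D s / s)"
        using assms(2)[OF False] by (smt (verit) mult_right_mono)
      then show ?thesis using \<open>0 \<le> D s / s\<close> by (simp add: ennreal_mult[symmetric] ennreal_leI)
    qed (use assms(3) in simp)
  qed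
  also have "\<dots> = ennreal (max 0 C) * (\<integral>\<^sup>+ s. ennreal (D s / s) \<partial>lborel)"
    by (rule nn_integral_cmult) simp
  also have "\<dots> < \<infinity>" using nn_integral_D_div_finite by (simp add: ennreal_mult_less_top)
  finally show ?thesis .
qed

lemma D_div_max_nonneg: "0 \<le> D s / max t s"
  using D_nonzero_ge_1[of s] D_nonneg[of s] by (cases "D s = 0") auto

lemma h_eq_nn_integral: "ennreal (h t) = (\<integral>\<^sup>+ s. ennreal (D s / max t s) \<partial>lborel)"
proof -
  have "(\<integral>\<^sup>+ s. ennreal (D s / max t s) \<partial>lborel) < \<infinity>"
  proof (rule nn_integral_finite_if_dominated[where C=1])
    fix s assume "D s \<noteq> 0"
    then show "D s / max t s \<le> 1 * (D s / s)"
      using D_nonzero_ge_1[of s] D_nonneg[of s] by (simp add: divide_left_mono)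
  qed (auto simp: D_div_max_nonneg)
  moreover have "(\<integral>\<^sup>+ s\<in>{1..}. ennreal (d s / max t s) \<partial>lborel)
      = (\<integral>\<^sup>+ s. ennreal (D s / max t s) \<partial>lborel)"
    by (rule nn_integral_cong) (auto simp: D_def indicator_def)
  ultimately show ?thesis
    unfolding hh_def by (simp add: ennreal_enn2real_if less_top)
qed

lemma h_nonneg: "0 \<le> h t"
  by (simp add: hh_def)

lemma h_antimono:
  assumes "t \<le> t'"
  shows "h t' \<le> h t"
proof -
  have "ennreal (h t') \<le> ennreal (h t)"
    unfolding h_eq_nn_integral
  proof (rule nn_integral_mono)
    fix s show "ennreal (D s / max t' s) \<le> ennreal (D s / max t s)"
      using assms D_nonzero_ge_1[of s] D_nonneg[of s]
      by (cases "D s = 0") (auto intro!: ennreal_leI divide_left_mono)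
  qed
  then show ?thesis using h_nonneg by simp
qed

lemma h_measurable[measurable]: "h \<in> borel_measurable borel"
proof -
  have "(\<lambda>t. - h t) \<in> borel_measurable borel"
    by (rule borel_measurable_mono) (auto simp: mono_def h_antimono)
  then have "(\<lambda>t. - (- h t)) \<in> borel_measurable borel" by measurable
  then show ?thesis by simp
qed

text \<open>No hypothesis \<open>1 \<le> t\<close> is needed: \<open>h\<close> is constant on \<open>(-\<infinity>, 1]\<close>.\<close>
lemma h_le_h_1: "h t \<le> h 1"
proof -
  have "ennreal (h t) \<le> ennreal (h 1)"
    unfolding h_eq_nn_integral
  proof (rule nn_integral_mono)
    fix s show "ennreal (D s / max t s) \<le> ennreal (D s / max 1 s)"
      using D_nonzero_ge_1[of s] D_nonneg[of s]
      by (cases "D s = 0") (auto intro!: ennreal_leI divide_left_mono)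
  qed
  then show ?thesis using h_nonneg by simp
qed

lemma Q_integrand_nonneg: "0 \<le> D s * h s ^ k / max t s"
  using mult_nonneg_nonneg[OF D_div_max_nonneg[of s t] zero_le_power[OF h_nonneg, of s k]]
  by (simp add: mult.commute)

lemma Q_eq_nn_integral: "ennreal (Q k t) = (\<integral>\<^sup>+ s. ennreal (D s * h s ^ k / max t s) \<partial>lborel)"
proof -
  have "(\<integral>\<^sup>+ s. ennreal (D s * h s ^ k / max t s) \<partial>lborel) < \<infinity>"
  proof (rule nn_integral_finite_if_dominated[where C="h 1 ^ k"])
    fix s assume "D s \<noteq> 0"
    then have "1 \<le> s" by (rule D_nonzero_ge_1)
    have "D s * h s ^ k / max t s \<le> D s * h 1 ^ k / max t s"
      using D_nonneg[of s] h_nonneg[of s] h_le_h_1[of s] \<open>1 \<le> s\<close>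
      by (intro divide_right_mono mult_left_mono power_mono) auto
    also have "\<dots> \<le> D s * h 1 ^ k / s"
      using D_nonneg[of s] h_nonneg[of 1] \<open>1 \<le> s\<close> by (intro divide_left_mono) auto
    finally show "D s * h s ^ k / max t s \<le> h 1 ^ k * (D s / s)" by (simp add: ac_simps)
  qed (auto simp: Q_integrand_nonneg)
  moreover have "(\<integral>\<^sup>+ s\<in>{1..}. ennreal (d s * h s ^ k / max t s) \<partial>lborel)
      = (\<integral>\<^sup>+ s. ennreal (D s * h s ^ k / max t s) \<partial>lborel)"
    by (rule nn_integral_cong) (auto simp: D_def indicator_def)
  ultimately show ?thesis
    unfolding QQ_def by (simp add: ennreal_enn2real_if less_top)
qed

lemma Q_nonneg: "0 \<le> QQ d k t"
  by (simp add: QQ_def)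

lemma Q_0: "QQ d 0 t = h t"
proof -
  have "ennreal (QQ d 0 t) = ennreal (h t)"
    using Q_eq_nn_integral[of 0 t] h_eq_nn_integral[of t] by simp
  then show ?thesis using Q_nonneg h_nonneg by simp
qed

lemma Q_antimono:
  assumes "t \<le> t'"
  shows "Q k t' \<le> Q k t"
proof -
  have "ennreal (Q k t') \<le> ennreal (Q k t)"
    unfolding Q_eq_nn_integral
  proof (rule nn_integral_mono)
    fix s show "ennreal (D s * h s ^ k / max t' s) \<le> ennreal (D s * h s ^ k / max t s)"
      using assms D_nonzero_ge_1[of s] D_nonneg[of s] h_nonneg[of s]
      by (cases "D s = 0") (auto intro!: ennreal_leI divide_left_mono)
  qed
  then show ?thesis using Q_nonneg by simp
qed

lemma Q_measurable[measurable]: "Q k \<in> borel_measurable borel"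
proof -
  have "(\<lambda>t. - Q k t) \<in> borel_measurable borel"
    by (rule borel_measurable_mono) (auto simp: mono_def Q_antimono)
  then have "(\<lambda>t. - (- Q k t)) \<in> borel_measurable borel" by measurable
  then show ?thesis by simp
qed

lemma Q_integrable: "integrable lborel (\<lambda>s. D s * h s ^ k / max t s)"
  by (rule integrableI_nonneg) (auto simp: Q_integrand_nonneg Q_eq_nn_integral[symmetric])

lemma Q_eq_integral: "Q k t = (\<integral> s. D s * h s ^ k / max t s \<partial>lborel)"
proof -
  have "ennreal (Q k t) = ennreal (\<integral> s. D s * h s ^ k / max t s \<partial>lborel)"
    unfolding Q_eq_nn_integral
    by (rule nn_integral_eq_integral) (auto simp: Q_integrable Q_integrand_nonneg)
  then show ?thesis
    using Q_nonneg by (simp add: Q_integrand_nonneg integral_nonneg)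
qed

lemma QQ_int_minus_1: "QQ d (int m - 1) = (if m = 0 then (\<lambda>_. 1) else Q (m - 1))"
  by (cases m) (auto simp: fun_eq_iff QQ_def)

lemma N_integrand_nonneg: "0 \<le> indicator {..t} s * D s * h s ^ k"
  using D_nonneg[of s] h_nonneg[of s] by simp

lemma N_integrable: "integrable lborel (\<lambda>s. indicator {..t} s * D s * h s ^ k)"
proof (rule integrableI_nonneg)
  show "(\<integral>\<^sup>+ s. ennreal (indicator {..t} s * D s * h s ^ k) \<partial>lborel) < \<infinity>"
  proof (rule nn_integral_finite_if_dominated[where C="max 1 t * h 1 ^ k"])
    fix s assume "D s \<noteq> 0"
    then have "1 \<le> s" by (rule D_nonzero_ge_1)
    show "indicator {..t} s * D s * h s ^ k \<le> max 1 t * h 1 ^ k * (D s / s)"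
    proof (cases "s \<le> t")
      case True
      have "h s ^ k \<le> h 1 ^ k"
        by (intro power_mono h_le_h_1 h_nonneg)
      then have "D s * h s ^ k \<le> (s * h 1 ^ k) * (D s / s)"
        using D_nonneg[of s] \<open>1 \<le> s\<close> by (simp add: mult_left_mono mult.commute)
      also have "\<dots> \<le> max 1 t * h 1 ^ k * (D s / s)"
        using True \<open>1 \<le> s\<close> D_nonneg[of s] h_nonneg[of 1] by (intro mult_right_mono) auto
      finally show ?thesis using True by simp
    qed (use \<open>1 \<le> s\<close> D_nonneg[of s] h_nonneg[of 1] in simp)
  qed (auto simp: N_integrand_nonneg)
qed (auto simp: N_integrand_nonneg)

lemma N_eq_integral: "N k t = (\<integral> s. indicator {..t} s * D s * h s ^ k \<partial>lborel)"
  unfolding NN_def set_lebesgue_integral_def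
  by (rule Bochner_Integration.integral_cong) (auto simp: indicator_def D_def)

lemma N_eq_nn_integral: "ennreal (N k t) = (\<integral>\<^sup>+ s. ennreal (indicator {..t} s * D s * h s ^ k) \<partial>lborel)"
  unfolding N_eq_integral
  by (rule nn_integral_eq_integral[symmetric]) (auto simp: N_integrable N_integrand_nonneg)

lemma N_nonneg: "0 \<le> N k t"
  unfolding N_eq_integral by (rule Bochner_Integration.integral_nonneg) (simp add: N_integrand_nonneg)

lemma N_mono:
  assumes "t \<le> t'"
  shows "N k t \<le> N k t'"
proof -
  have "ennreal (N k t) \<le> ennreal (N k t')"
    unfolding N_eq_nn_integral
    by (rule nn_integral_mono) (use assms D_nonneg h_nonneg in \<open>auto intro!: ennreal_leI simp: indicator_def\<close>)
  then show ?thesis using N_nonneg by simp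
qed

lemma N_measurable[measurable]: "N k \<in> borel_measurable borel"
  by (rule borel_measurable_mono) (auto simp: mono_def N_mono)

lemma N_eq_0_below_1: "r < 1 \<Longrightarrow> N k r = 0"
  unfolding N_eq_integral by (rule integral_eq_zero_AE) (auto simp: indicator_def D_eq_0_below_1)

lemma nn_integral_mult_N:
  assumes [measurable]: "g \<in> borel_measurable borel" and g_nonneg: "\<And>x. 0 \<le> g x"
  shows "(\<integral>\<^sup>+ s. ennreal (g s * N k s) \<partial>lborel)
       = (\<integral>\<^sup>+ u. ennreal (D u * h u ^ k) * (\<integral>\<^sup>+ s. ennreal (g s * indicator {u..} s) \<partial>lborel) \<partial>lborel)"
proof -
  have "ennreal (g s * N k s)
      = ennreal (g s) * (\<integral>\<^sup>+ u. ennreal (D u * h u ^ k * indicator {..s} u) \<partial>lborel)" for s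
    using g_nonneg N_nonneg N_eq_nn_integral[of k s] by (simp add: ennreal_mult mult_ac)
  then have "(\<integral>\<^sup>+ s. ennreal (g s * N k s) \<partial>lborel)
      = (\<integral>\<^sup>+ s. ennreal (g s) * (\<integral>\<^sup>+ u. ennreal (D u * h u ^ k * indicator {..s} u) \<partial>lborel) \<partial>lborel)"
    by simp
  also have "\<dots> = (\<integral>\<^sup>+ u. ennreal (D u * h u ^ k) * (\<integral>\<^sup>+ s. ennreal (g s * indicator {u..} s) \<partial>lborel) \<partial>lborel)"
    by (rule nn_integral_swap_triangle) (auto simp: g_nonneg D_nonneg h_nonneg)
  finally show ?thesis .
qed

lemma nn_integral_N_over_square:
  assumes "0 < t"
  shows "(\<integral>\<^sup>+ s. ennreal (indicator {t..} s / s\<^sup>2 * N k s) \<partial>lborel) = ennreal (Q k t)"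
proof -
  have kernel: "(\<integral>\<^sup>+ s. ennreal (indicator {t..} s / s\<^sup>2 * indicator {u..} s) \<partial>lborel)
      = ennreal (1 / max t u)" for u
  proof -
    have "(\<integral>\<^sup>+ s. ennreal (indicator {t..} s / s\<^sup>2 * indicator {u..} s) \<partial>lborel)
        = (\<integral>\<^sup>+ s\<in>{max t u..}. ennreal (1 / s\<^sup>2) \<partial>lborel)"
      by (rule nn_integral_cong) (auto simp: indicator_def)
    also have "\<dots> = ennreal (1 / max t u)"
      using assms by (intro nn_integral_inverse_square_atLeast) auto
    finally show ?thesis .
  qed
  have "(\<integral>\<^sup>+ s. ennreal (indicator {t..} s / s\<^sup>2 * N k s) \<partial>lborel)
     = (\<integral>\<^sup>+ u. ennreal (D u * h u ^ k)
          * (\<integral>\<^sup>+ s. ennreal (indicator {t..} s / s\<^sup>2 * indicator {u..} s) \<partial>lborel) \<partial>lborel)"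
    by (rule nn_integral_mult_N) auto
  also have "\<dots> = (\<integral>\<^sup>+ u. ennreal (D u * h u ^ k) * ennreal (1 / max t u) \<partial>lborel)"
    by (simp only: kernel)
  also have "\<dots> = ennreal (Q k t)"
    unfolding Q_eq_nn_integral
    by (rule nn_integral_cong) (use assms D_nonneg h_nonneg in \<open>auto simp: ennreal_mult[symmetric]\<close>)
  finally show ?thesis .
qed

lemma nn_integral_N_over_square_greaterThan:
  assumes "0 < t"
  shows "(\<integral>\<^sup>+ s. ennreal (indicator {t<..} s / s\<^sup>2 * N k s) \<partial>lborel) = ennreal (Q k t)"
proof -
  have "(\<integral>\<^sup>+ s. ennreal (indicator {t<..} s / s\<^sup>2 * N k s) \<partial>lborel)
      = (\<integral>\<^sup>+ s. ennreal (indicator {t..} s / s\<^sup>2 * N k s) \<partial>lborel)"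
    by (rule nn_integral_cong_except_point[where c=t]) (auto simp: indicator_def)
  then show ?thesis using nn_integral_N_over_square[OF assms] by simp
qed

lemma nn_integral_N0_over_square_Icc:
  assumes "0 < u"
  shows "(\<integral>\<^sup>+ s. ennreal (indicator {u..t} s / s\<^sup>2 * N 0 s) \<partial>lborel) = ennreal (h u - h t)"
proof (cases "u \<le> t")
  case True
  have "ennreal (h u) = (\<integral>\<^sup>+ s. ennreal (indicator {u..} s / s\<^sup>2 * N 0 s) \<partial>lborel)"
    using nn_integral_N_over_square[of u 0] assms by (simp add: Q_0)
  also have "\<dots> = (\<integral>\<^sup>+ s. ennreal (indicator {u..t} s / s\<^sup>2 * N 0 s)
                        + ennreal (indicator {t<..} s / s\<^sup>2 * N 0 s) \<partial>lborel)"
    by (rule nn_integral_cong)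
      (use True N_nonneg in \<open>auto simp: indicator_def ennreal_plus[symmetric] simp del: ennreal_plus\<close>)
  also have "\<dots> = (\<integral>\<^sup>+ s. ennreal (indicator {u..t} s / s\<^sup>2 * N 0 s) \<partial>lborel) + ennreal (h t)"
    using nn_integral_N_over_square_greaterThan[of t 0] assms True
    by (subst nn_integral_add) (auto simp: Q_0)
  finally show ?thesis
    using h_nonneg by (rule ennreal_eq_add_ennreal_iff_diff)
next
  case False
  then show ?thesis using h_antimono[of t u] by (simp add: ennreal_neg)
qed

lemma N_diff_eq_nn_integral:
  assumes "t \<le> r"
  shows "(\<integral>\<^sup>+ s. ennreal (indicator {t..r} s * D s * h s ^ k) \<partial>lborel) = ennreal (N k r - N k t)"
proof -
  have "ennreal (N k r) = (\<integral>\<^sup>+ s. ennreal (indicator {..<t} s * D s * h s ^ k)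
                               + ennreal (indicator {t..r} s * D s * h s ^ k) \<partial>lborel)"
    unfolding N_eq_nn_integral
    by (rule nn_integral_cong)
      (use assms D_nonneg h_nonneg in \<open>auto simp: indicator_def ennreal_plus[symmetric] simp del: ennreal_plus\<close>)
  also have "\<dots> = (\<integral>\<^sup>+ s. ennreal (indicator {..<t} s * D s * h s ^ k) \<partial>lborel)
                 + (\<integral>\<^sup>+ s. ennreal (indicator {t..r} s * D s * h s ^ k) \<partial>lborel)"
    by (rule nn_integral_add) auto
  also have "(\<integral>\<^sup>+ s. ennreal (indicator {..<t} s * D s * h s ^ k) \<partial>lborel) = ennreal (N k t)"
    unfolding N_eq_nn_integral by (rule nn_integral_cong_except_point[where c=t]) (auto simp: indicator_def)
  finally show ?thesis
    using N_nonneg by (subst ennreal_eq_add_ennreal_iff_diff) (auto simp: add.commute)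
qed

lemma N_Suc_diff_eq_nn_integral:
  "ennreal (N (Suc m) t - h t * N m t)
     = (\<integral>\<^sup>+ u. ennreal (indicator {..t} u * D u * h u ^ m * (h u - h t)) \<partial>lborel)"
proof -
  have integrand: "indicator {..t} u * D u * h u ^ m * (h u - h t)
      = indicator {..t} u * D u * h u ^ Suc m - h t * (indicator {..t} u * D u * h u ^ m)" for u
    by (simp add: algebra_simps)
  have integrand_nonneg: "0 \<le> indicator {..t} u * D u * h u ^ m * (h u - h t)" for u
    using h_antimono[of u t] D_nonneg[of u] h_nonneg[of u] by (cases "u \<le> t") auto
  have integrable: "integrable lborel (\<lambda>u. indicator {..t} u * D u * h u ^ m * (h u - h t))"
    unfolding integrand
    by (intro Bochner_Integration.integrable_diff Bochner_Integration.integrable_mult_right N_integrable)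
  have "N (Suc m) t - h t * N m t = (\<integral> u. indicator {..t} u * D u * h u ^ m * (h u - h t) \<partial>lborel)"
    unfolding integrand N_eq_integral using N_integrable[of t "Suc m"] N_integrable[of t m]
    by (subst Bochner_Integration.integral_diff) (auto simp del: power_Suc)
  moreover have "ennreal (\<integral> u. indicator {..t} u * D u * h u ^ m * (h u - h t) \<partial>lborel)
      = (\<integral>\<^sup>+ u. ennreal (indicator {..t} u * D u * h u ^ m * (h u - h t)) \<partial>lborel)"
    using integrable by (intro nn_integral_eq_integral[symmetric] AE_I2 integrand_nonneg)
  ultimately show ?thesis by simp
qed

lemma nn_integral_N0_N_over_square_upto:
  assumes "1 \<le> t"
  shows "(\<integral>\<^sup>+ s. ennreal (indicator {1..t} s / s\<^sup>2 * N 0 s * N m s) \<partial>lborel)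
       = ennreal (N (Suc m) t - h t * N m t)"
proof -
  have inner: "ennreal (D u * h u ^ m)
        * (\<integral>\<^sup>+ s. ennreal (indicator {1..t} s / s\<^sup>2 * N 0 s * indicator {u..} s) \<partial>lborel)
      = ennreal (indicator {..t} u * D u * h u ^ m * (h u - h t))" for u
  proof (cases "D u = 0")
    case False
    then have "1 \<le> u" by (rule D_nonzero_ge_1)
    then have "(\<integral>\<^sup>+ s. ennreal (indicator {1..t} s / s\<^sup>2 * N 0 s * indicator {u..} s) \<partial>lborel)
        = (\<integral>\<^sup>+ s. ennreal (indicator {u..t} s / s\<^sup>2 * N 0 s) \<partial>lborel)"
      by (intro nn_integral_cong) (auto simp: indicator_def)
    also have "\<dots> = ennreal (h u - h t)"
      using \<open>1 \<le> u\<close> by (intro nn_integral_N0_over_square_Icc) auto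
    finally show ?thesis
      using D_nonneg[of u] h_nonneg[of u] h_antimono[of u t] h_antimono[of t u]
      by (cases "u \<le> t") (auto simp: ennreal_mult[symmetric] ennreal_neg)
  qed simp
  have "(\<integral>\<^sup>+ s. ennreal (indicator {1..t} s / s\<^sup>2 * N 0 s * N m s) \<partial>lborel)
      = (\<integral>\<^sup>+ u. ennreal (D u * h u ^ m)
          * (\<integral>\<^sup>+ s. ennreal (indicator {1..t} s / s\<^sup>2 * N 0 s * indicator {u..} s) \<partial>lborel) \<partial>lborel)"
    by (rule nn_integral_mult_N) (auto simp: N_nonneg)
  also have "\<dots> = ennreal (N (Suc m) t - h t * N m t)"
    unfolding inner N_Suc_diff_eq_nn_integral ..
  finally show ?thesis .
qed

lemma nn_integral_N0_N_over_square_from: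
  assumes "1 \<le> t"
  shows "(\<integral>\<^sup>+ s. ennreal (indicator {t..} s / s\<^sup>2 * N 0 s * N m s) \<partial>lborel)
       = (\<integral>\<^sup>+ u. ennreal (h (max t u) * D u * h u ^ m) \<partial>lborel)"
proof -
  have inner: "(\<integral>\<^sup>+ s. ennreal (indicator {t..} s / s\<^sup>2 * N 0 s * indicator {u..} s) \<partial>lborel)
      = ennreal (h (max t u))" for u
  proof -
    have "(\<integral>\<^sup>+ s. ennreal (indicator {t..} s / s\<^sup>2 * N 0 s * indicator {u..} s) \<partial>lborel)
        = (\<integral>\<^sup>+ s. ennreal (indicator {max t u..} s / s\<^sup>2 * N 0 s) \<partial>lborel)"
      by (rule nn_integral_cong) (auto simp: indicator_def)
    also have "\<dots> = ennreal (h (max t u))"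
      using nn_integral_N_over_square[of "max t u" 0] assms by (simp add: Q_0)
    finally show ?thesis .
  qed
  have "(\<integral>\<^sup>+ s. ennreal (indicator {t..} s / s\<^sup>2 * N 0 s * N m s) \<partial>lborel)
      = (\<integral>\<^sup>+ u. ennreal (D u * h u ^ m)
          * (\<integral>\<^sup>+ s. ennreal (indicator {t..} s / s\<^sup>2 * N 0 s * indicator {u..} s) \<partial>lborel) \<partial>lborel)"
    by (rule nn_integral_mult_N) (auto simp: N_nonneg)
  also have "\<dots> = (\<integral>\<^sup>+ u. ennreal (D u * h u ^ m) * ennreal (h (max t u)) \<partial>lborel)"
    by (simp only: inner)
  also have "\<dots> = (\<integral>\<^sup>+ u. ennreal (h (max t u) * D u * h u ^ m) \<partial>lborel)"
    by (simp add: D_nonneg h_nonneg ennreal_mult[symmetric] mult_ac)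
  finally show ?thesis .
qed

lemma N_mult_h_power_le: "N i t * h t ^ j \<le> N (i + j) t"
proof -
  have "N i t * h t ^ j = (\<integral> s. indicator {..t} s * D s * h s ^ i * h t ^ j \<partial>lborel)"
    unfolding N_eq_integral by simp
  also have "\<dots> \<le> (\<integral> s. indicator {..t} s * D s * h s ^ (i + j) \<partial>lborel)"
  proof (rule integral_mono)
    show "integrable lborel (\<lambda>s. indicator {..t} s * D s * h s ^ i * h t ^ j)"
      using N_integrable[of t i] by simp
    fix s
    show "indicator {..t} s * D s * h s ^ i * h t ^ j \<le> indicator {..t} s * D s * h s ^ (i + j)"
    proof (cases "s \<le> t")
      case True
      then have "h t ^ j \<le> h s ^ j" by (intro power_mono h_antimono h_nonneg)
      then have "(D s * h s ^ i) * h t ^ j \<le> (D s * h s ^ i) * h s ^ j"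
        using D_nonneg h_nonneg by (intro mult_left_mono) auto
      then show ?thesis using True by (simp add: power_add mult_ac)
    qed simp
  qed (rule N_integrable)
  finally show ?thesis unfolding N_eq_integral .
qed

lemma h_mult_N_le: "h t * N k t \<le> N (k + 1) t"
  using N_mult_h_power_le[of k t 1] by (simp add: mult.commute)

lemma N_mult_N_le: "N i t * N j t \<le> N 0 t * N (i + j) t"
proof -
  have "(\<integral> x. indicator {..t} x * D x * h x ^ i \<partial>lborel) * (\<integral> x. indicator {..t} x * D x * h x ^ j \<partial>lborel)
      \<le> (\<integral> x. indicator {..t} x * D x \<partial>lborel) * (\<integral> x. indicator {..t} x * D x * h x ^ (i + j) \<partial>lborel)"
    using N_integrable[of t 0]
    by (intro integral_power_mult_integral_power_le[where C="h 1"]) (auto simp: D_nonneg h_nonneg h_le_h_1)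
  then show ?thesis unfolding N_eq_integral by simp
qed

lemma Q_mult_Q_le: "Q i t * Q j t \<le> h t * Q (i + j) t"
proof -
  have Q_eq: "Q k t = (\<integral> x. D x / max t x * h x ^ k \<partial>lborel)" for k
    unfolding Q_eq_integral by simp
  have "(\<integral> x. D x / max t x * h x ^ i \<partial>lborel) * (\<integral> x. D x / max t x * h x ^ j \<partial>lborel)
      \<le> (\<integral> x. D x / max t x \<partial>lborel) * (\<integral> x. D x / max t x * h x ^ (i + j) \<partial>lborel)"
    using Q_integrable[of 0 t]
    by (intro integral_power_mult_integral_power_le[where C="h 1"])
      (auto simp: D_div_max_nonneg h_nonneg h_le_h_1)
  then show ?thesis
    unfolding Q_eq[symmetric] using Q_eq[of 0] by (simp add: Q_0)
qed

text \<open>The contribution of \<open>s > t\<close> to \<open>Q\<^sub>k(t)\<close>; that of \<open>s \<le> t\<close> is \<open>N\<^sub>k(t) / t\<close>.\<close>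
definition Q_tail :: "nat \<Rightarrow> real \<Rightarrow> real" where
  "Q_tail k t = Q k t - N k t / t"

lemma Q_tail_eq_integral:
  assumes "1 \<le> t"
  shows "Q_tail k t = (\<integral> s. indicator {t<..} s * D s * h s ^ k / s \<partial>lborel)"
    and "integrable lborel (\<lambda>s. indicator {t<..} s * D s * h s ^ k / s)"
proof -
  have split: "(\<lambda>s. indicator {t<..} s * D s * h s ^ k / s)
      = (\<lambda>s. D s * h s ^ k / max t s - indicator {..t} s * D s * h s ^ k / t)"
    using assms by (auto simp: indicator_def fun_eq_iff max_def)
  show "integrable lborel (\<lambda>s. indicator {t<..} s * D s * h s ^ k / s)"
    unfolding split using Q_integrable N_integrable
    by (intro Bochner_Integration.integrable_diff integrable_divide) auto
  show "Q_tail k t = (\<integral> s. indicator {t<..} s * D s * h s ^ k / s \<partial>lborel)"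
    unfolding split Q_tail_def using Q_eq_integral N_eq_integral Q_integrable N_integrable
    by (subst Bochner_Integration.integral_diff) (auto intro: integrable_divide)
qed

lemma Q_tail_nonneg: "1 \<le> t \<Longrightarrow> 0 \<le> Q_tail k t"
  unfolding Q_tail_eq_integral
  by (rule Bochner_Integration.integral_nonneg) (auto simp: indicator_def D_nonneg h_nonneg)

lemma Q_tail_le:
  assumes "1 \<le> t"
  shows "Q_tail k t \<le> h t ^ k * Q_tail 0 t"
proof -
  have "Q_tail k t \<le> (\<integral> s. h t ^ k * (indicator {t<..} s * D s * h s ^ 0 / s) \<partial>lborel)"
    unfolding Q_tail_eq_integral[OF assms]
  proof (rule integral_mono)
    show "integrable lborel (\<lambda>s. h t ^ k * (indicator {t<..} s * D s * h s ^ 0 / s))"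
      using Q_tail_eq_integral(2)[OF assms, of 0] by (rule Bochner_Integration.integrable_mult_right)
    fix s
    show "indicator {t<..} s * D s * h s ^ k / s \<le> h t ^ k * (indicator {t<..} s * D s * h s ^ 0 / s)"
    proof (cases "t < s")
      case True
      then have "h s ^ k \<le> h t ^ k" by (intro power_mono h_antimono h_nonneg) auto
      then have "D s * h s ^ k / s \<le> D s * h t ^ k / s"
        using D_nonneg True assms by (intro divide_right_mono mult_left_mono) auto
      then show ?thesis using True by (simp add: mult_ac)
    qed simp
  qed (rule Q_tail_eq_integral(2)[OF assms])
  also have "\<dots> = h t ^ k * Q_tail 0 t"
    unfolding Q_tail_eq_integral[OF assms] by (rule integral_mult_right_zero)
  finally show ?thesis .
qed

lemma N_mult_Q_le:
  assumes "1 \<le> t"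
  shows "N i t * Q j t \<le> h t * N (i + j) t"
proof -
  have Q_split: "Q j t = N j t / t + Q_tail j t" and h_split: "h t = N 0 t / t + Q_tail 0 t"
    using Q_0[of t] by (auto simp: Q_tail_def)
  have "N i t * Q j t = (N i t * N j t) / t + N i t * Q_tail j t"
    unfolding Q_split by (simp add: algebra_simps)
  also have "\<dots> \<le> (N 0 t * N (i + j) t) / t + N i t * (h t ^ j * Q_tail 0 t)"
    using N_mult_N_le[of i t j] Q_tail_le[OF assms, of j] N_nonneg[of i t] assms
    by (intro add_mono divide_right_mono mult_left_mono) auto
  also have "N i t * (h t ^ j * Q_tail 0 t) \<le> N (i + j) t * Q_tail 0 t"
    using N_mult_h_power_le[of i t j] Q_tail_nonneg[OF assms]
    by (subst mult.assoc[symmetric]) (rule mult_right_mono)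
  also have "(N 0 t * N (i + j) t) / t + N (i + j) t * Q_tail 0 t = h t * N (i + j) t"
    unfolding h_split by (simp add: algebra_simps)
  finally show ?thesis by simp
qed

lemma nn_integral_mult_Q:
  assumes [measurable]: "w \<in> borel_measurable borel"
    and w_nonneg: "\<And>x. 0 \<le> w x" and w_below_1: "\<And>x. x < 1 \<Longrightarrow> w x = 0"
  shows "(\<integral>\<^sup>+ s. ennreal (w s * Q k s) \<partial>lborel)
       = (\<integral>\<^sup>+ r. ennreal (N k r / r\<^sup>2) * (\<integral>\<^sup>+ s. ennreal (w s * indicator {..r} s) \<partial>lborel) \<partial>lborel)"
proof -
  have "ennreal (w s * Q k s)
      = ennreal (w s) * (\<integral>\<^sup>+ r. ennreal (N k r / r\<^sup>2 * indicator {s..} r) \<partial>lborel)" for s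
  proof (cases "s < 1")
    case False
    have "ennreal (Q k s) = (\<integral>\<^sup>+ r. ennreal (N k r / r\<^sup>2 * indicator {s..} r) \<partial>lborel)"
      using nn_integral_N_over_square[of s k] False by (simp add: mult.commute)
    then show ?thesis using w_nonneg Q_nonneg by (simp add: ennreal_mult)
  qed (simp add: w_below_1)
  then have "(\<integral>\<^sup>+ s. ennreal (w s * Q k s) \<partial>lborel)
      = (\<integral>\<^sup>+ s. ennreal (w s) * (\<integral>\<^sup>+ r. ennreal (N k r / r\<^sup>2 * indicator {s..} r) \<partial>lborel) \<partial>lborel)"
    by simp
  also have "\<dots> = (\<integral>\<^sup>+ r. ennreal (N k r / r\<^sup>2) * (\<integral>\<^sup>+ s. ennreal (w s * indicator {..r} s) \<partial>lborel) \<partial>lborel)"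
    by (rule nn_integral_swap_triangle[symmetric]) (auto simp: w_nonneg N_nonneg)
  finally show ?thesis .
qed

lemma nn_integral_over_square_le_Q:
  assumes "1 \<le> t" and le_N: "\<And>r. t \<le> r \<Longrightarrow> F r \<le> N k r" and F_nonneg: "\<And>r. 0 \<le> F r"
  shows "(\<integral>\<^sup>+ r. ennreal (indicator {t..} r / r\<^sup>2 * F r) \<partial>lborel) \<le> ennreal (Q k t)"
proof -
  have "(\<integral>\<^sup>+ r. ennreal (indicator {t..} r / r\<^sup>2 * F r) \<partial>lborel)
      \<le> (\<integral>\<^sup>+ r. ennreal (indicator {t..} r / r\<^sup>2 * N k r) \<partial>lborel)"
    by (rule nn_integral_mono) (auto simp: indicator_def le_N intro!: ennreal_leI divide_right_mono)
  also have "\<dots> = ennreal (Q k t)"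
    using nn_integral_N_over_square assms by simp
  finally show ?thesis .
qed

lemma nn_integral_D_h_power_between:
  "(\<integral>\<^sup>+ s. ennreal (indicator {t..} s * D s * h s ^ j * indicator {..r} s) \<partial>lborel)
     = ennreal (indicator {t..} r * (N j r - N j t))"
proof (cases "t \<le> r")
  case True
  have "(\<integral>\<^sup>+ s. ennreal (indicator {t..} s * D s * h s ^ j * indicator {..r} s) \<partial>lborel)
      = (\<integral>\<^sup>+ s. ennreal (indicator {t..r} s * D s * h s ^ j) \<partial>lborel)"
    by (rule nn_integral_cong) (auto simp: indicator_def)
  then show ?thesis using N_diff_eq_nn_integral[OF True] True by simp
next
  case False
  then have "(\<integral>\<^sup>+ s. ennreal (indicator {t..} s * D s * h s ^ j * indicator {..r} s) \<partial>lborel) = 0"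
    by (subst nn_integral_0_iff_AE) (auto simp: indicator_def)
  then show ?thesis using False by simp
qed

lemma nn_integral_D_h_power_upto_min:
  "(\<integral>\<^sup>+ s. ennreal (indicator {1..t} s * D s * h s ^ j * indicator {..r} s) \<partial>lborel)
     = ennreal (N j (min r t))"
  unfolding N_eq_nn_integral
  by (rule nn_integral_cong) (auto simp: indicator_def D_eq_0_below_1)

lemma nn_integral_N0_Q_over_square:
  assumes "1 \<le> t"
  shows "(\<integral>\<^sup>+ s. ennreal (indicator {t..} s / s\<^sup>2 * (N 0 s * Q k s)) \<partial>lborel)
       = (\<integral>\<^sup>+ r. ennreal (N k r / r\<^sup>2) * ennreal (h t - h r) \<partial>lborel)"
proof -
  have inner: "(\<integral>\<^sup>+ s. ennreal (indicator {t..} s / s\<^sup>2 * N 0 s * indicator {..r} s) \<partial>lborel)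
      = ennreal (h t - h r)" for r
  proof -
    have "(\<integral>\<^sup>+ s. ennreal (indicator {t..} s / s\<^sup>2 * N 0 s * indicator {..r} s) \<partial>lborel)
        = (\<integral>\<^sup>+ s. ennreal (indicator {t..r} s / s\<^sup>2 * N 0 s) \<partial>lborel)"
      by (rule nn_integral_cong) (auto simp: indicator_def)
    also have "\<dots> = ennreal (h t - h r)"
      using assms by (intro nn_integral_N0_over_square_Icc) auto
    finally show ?thesis .
  qed
  have "(\<integral>\<^sup>+ s. ennreal (indicator {t..} s / s\<^sup>2 * N 0 s * Q k s) \<partial>lborel)
      = (\<integral>\<^sup>+ r. ennreal (N k r / r\<^sup>2)
          * (\<integral>\<^sup>+ s. ennreal (indicator {t..} s / s\<^sup>2 * N 0 s * indicator {..r} s) \<partial>lborel) \<partial>lborel)"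
    by (rule nn_integral_mult_Q) (use assms N_nonneg in \<open>auto simp: indicator_def\<close>)
  then show ?thesis
    unfolding inner by (simp add: mult.assoc)
qed

text \<open>Write \<open>h(t) = h(r) + (h(t) - h(r))\<close> inside \<open>h(t) Q\<^sub>k(t) = \<integral>\<^sub>t\<^sup>\<infinity> h(t) N\<^sub>k(r) / r\<^sup>2 dr\<close>;
  each of the two resulting integrals is at most \<open>Q\<^sub>k\<^sub>+\<^sub>1(t)\<close>.\<close>
lemma h_mult_Q_le:
  assumes "1 \<le> t"
  shows "h t * Q k t \<le> 2 * Q (k + 1) t"
proof -
  have split: "ennreal (h t) * ennreal (indicator {t..} r / r\<^sup>2 * N k r)
      = ennreal (indicator {t..} r / r\<^sup>2 * (h r * N k r))
        + ennreal (N k r / r\<^sup>2) * ennreal (h t - h r)" for r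
  proof (cases "t \<le> r")
    case True
    have "h t * (N k r / r\<^sup>2) = h r * (N k r / r\<^sup>2) + (N k r / r\<^sup>2) * (h t - h r)"
      by (simp add: algebra_simps diff_divide_distrib)
    moreover have "ennreal (h r * (N k r / r\<^sup>2) + (N k r / r\<^sup>2) * (h t - h r))
        = ennreal (h r * (N k r / r\<^sup>2)) + ennreal ((N k r / r\<^sup>2) * (h t - h r))"
      using h_antimono[OF True] h_nonneg N_nonneg by (intro ennreal_plus) auto
    ultimately show ?thesis
      using True h_antimono[OF True] h_nonneg N_nonneg by (simp add: ennreal_mult[symmetric] mult_ac)
  qed (use h_antimono[of r t] in \<open>simp add: ennreal_neg\<close>)
  have "ennreal (h t * Q k t)
      = (\<integral>\<^sup>+ r. ennreal (h t) * ennreal (indicator {t..} r / r\<^sup>2 * N k r) \<partial>lborel)"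
    using nn_integral_N_over_square[of t k] assms h_nonneg Q_nonneg
    by (simp add: ennreal_mult nn_integral_cmult)
  also have "\<dots> = (\<integral>\<^sup>+ r. ennreal (indicator {t..} r / r\<^sup>2 * (h r * N k r)) \<partial>lborel)
      + (\<integral>\<^sup>+ s. ennreal (indicator {t..} s / s\<^sup>2 * (N 0 s * Q k s)) \<partial>lborel)"
    unfolding split nn_integral_N0_Q_over_square[OF assms] by (rule nn_integral_add) auto
  also have "(\<integral>\<^sup>+ r. ennreal (indicator {t..} r / r\<^sup>2 * (h r * N k r)) \<partial>lborel) \<le> ennreal (Q (k + 1) t)"
    by (rule nn_integral_over_square_le_Q[OF assms]) (use h_mult_N_le h_nonneg N_nonneg in auto)
  also have "(\<integral>\<^sup>+ s. ennreal (indicator {t..} s / s\<^sup>2 * (N 0 s * Q k s)) \<partial>lborel) \<le> ennreal (Q (k + 1) t)"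
  proof (rule nn_integral_over_square_le_Q[OF assms])
    fix r assume "t \<le> r"
    have "N 0 r * Q k r \<le> h r * N (0 + k) r" using N_mult_Q_le[of r 0 k] \<open>t \<le> r\<close> assms by simp
    also have "\<dots> \<le> N (k + 1) r" using h_mult_N_le by simp
    finally show "N 0 r * Q k r \<le> N (k + 1) r" .
  qed (use N_nonneg Q_nonneg in auto)
  finally have "ennreal (h t * Q k t) \<le> ennreal (2 * Q (k + 1) t)"
    using Q_nonneg by (simp add: ennreal_plus[symmetric] del: ennreal_plus)
  then show ?thesis using Q_nonneg by simp
qed

lemma nn_integral_Icc_D_mult_le:
  assumes "a \<le> b" and [measurable]: "X \<in> borel_measurable borel"
    and X_nonneg: "\<And>s. 0 \<le> X s" and X_le: "\<And>s. a \<le> s \<Longrightarrow> s \<le> b \<Longrightarrow> X s \<le> C"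
  shows "(\<integral>\<^sup>+ s. ennreal (indicator {a..b} s * D s * X s) \<partial>lborel) \<le> ennreal (C * (N 0 b - N 0 a))"
proof -
  have "0 \<le> C" using order_trans[OF X_nonneg X_le[OF order_refl \<open>a \<le> b\<close>]] .
  have "(\<integral>\<^sup>+ s. ennreal (indicator {a..b} s * D s * X s) \<partial>lborel)
      \<le> (\<integral>\<^sup>+ s. ennreal C * ennreal (indicator {a..b} s * D s * h s ^ 0) \<partial>lborel)"
  proof (rule nn_integral_mono)
    fix s
    show "ennreal (indicator {a..b} s * D s * X s) \<le> ennreal C * ennreal (indicator {a..b} s * D s * h s ^ 0)"
    proof (cases "s \<in> {a..b}")
      case True
      then have "D s * X s \<le> D s * C" using X_le D_nonneg by (intro mult_left_mono) auto
      then show ?thesis using True \<open>0 \<le> C\<close> D_nonneg by (simp add: ennreal_mult[symmetric] mult.commute)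
    qed simp
  qed
  also have "\<dots> = ennreal C * ennreal (N 0 b - N 0 a)"
    using N_diff_eq_nn_integral[OF \<open>a \<le> b\<close>, of 0] by (subst nn_integral_cmult) auto
  also have "\<dots> = ennreal (C * (N 0 b - N 0 a))"
    using \<open>0 \<le> C\<close> N_mono[OF \<open>a \<le> b\<close>] by (simp add: ennreal_mult)
  finally show ?thesis .
qed

lemma N_1_diff_le:
  assumes "t \<le> r"
  shows "N 1 r - N 1 t \<le> h t * (N 0 r - N 0 t)"
proof -
  have "ennreal (N 1 r - N 1 t) = (\<integral>\<^sup>+ s. ennreal (indicator {t..r} s * D s * h s) \<partial>lborel)"
    using N_diff_eq_nn_integral[OF assms, of 1] by simp
  also have "\<dots> \<le> ennreal (h t * (N 0 r - N 0 t))"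
    by (rule nn_integral_Icc_D_mult_le[OF assms]) (auto simp: h_nonneg h_antimono)
  finally show ?thesis
    using h_nonneg[of t] N_mono[OF assms, of 0] by (simp add: ennreal_le_iff)
qed

text \<open>As \<open>h\<close> is nonincreasing, its \<open>h0'\<close>-mean over \<open>[t, r]\<close> is at most \<open>h(t)\<close>, hence at
  most its mean over \<open>[1, r]\<close> (fact \<open>means\<close>); combine with \<open>N\<^sub>k N\<^sub>1 \<le> N\<^sub>0 N\<^sub>k\<^sub>+\<^sub>1\<close>.\<close>
lemma N_mult_N_1_diff_le:
  assumes "t \<le> r"
  shows "N k r * (N 1 r - N 1 t) \<le> N (k + 1) r * (N 0 r - N 0 t)"
proof -
  define X0 where "X0 = N 0 r - N 0 t"
  define X1 where "X1 = N 1 r - N 1 t"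
  have "0 \<le> X0" "0 \<le> X1" using N_mono[OF assms] by (auto simp: X0_def X1_def)
  have X1_le: "X1 \<le> h t * X0" using N_1_diff_le[OF assms] by (simp add: X0_def X1_def)
  have means: "X1 * N 0 r \<le> X0 * N 1 r"
  proof -
    have "X1 * N 0 r = X1 * N 0 t + X1 * X0" by (simp add: X0_def algebra_simps)
    also have "X1 * N 0 t \<le> (h t * X0) * N 0 t" using X1_le N_nonneg by (intro mult_right_mono) auto
    also have "(h t * X0) * N 0 t = X0 * (h t * N 0 t)" by simp
    also have "\<dots> \<le> X0 * N 1 t" using h_mult_N_le[of t 0] \<open>0 \<le> X0\<close> by (intro mult_left_mono) auto
    finally have "X1 * N 0 r \<le> X0 * N 1 t + X1 * X0" by simp
    also have "\<dots> = X0 * N 1 r" by (simp add: X1_def algebra_simps)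
    finally show ?thesis .
  qed
  show ?thesis
  proof (cases "N 0 r = 0")
    case True
    then have "X0 = 0" using N_mono[OF assms, of 0] N_nonneg[of 0 t] by (simp add: X0_def)
    then have "X1 = 0" using X1_le \<open>0 \<le> X1\<close> by simp
    then show ?thesis using \<open>X0 = 0\<close> by (simp add: X0_def X1_def)
  next
    case False
    then have "0 < N 0 r" using N_nonneg[of 0 r] by simp
    have "N 0 r * (N k r * X1) = N k r * (X1 * N 0 r)" by simp
    also have "\<dots> \<le> N k r * (X0 * N 1 r)" using means N_nonneg by (intro mult_left_mono) auto
    also have "\<dots> = X0 * (N k r * N 1 r)" by simp
    also have "\<dots> \<le> X0 * (N 0 r * N (k + 1) r)"
      using N_mult_N_le[of k r 1] \<open>0 \<le> X0\<close> by (intro mult_left_mono) auto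
    also have "\<dots> = N 0 r * (N (k + 1) r * X0)" by simp
    finally have "N k r * X1 \<le> N (k + 1) r * X0" using \<open>0 < N 0 r\<close> by simp
    then show ?thesis by (simp add: X0_def X1_def)
  qed
qed

lemma N_mult_N_min_le:
  "N k r * N j (min r t) \<le> indicator {1..t} r * N 0 r * N (k + j) r + indicator {t<..} r * N k r * N j t"
proof (cases "r \<le> t")
  case True
  then show ?thesis
    using N_mult_N_le[of k r j] N_eq_0_below_1[of r k] by (cases "r < 1") (auto simp: N_nonneg)
qed (auto simp: N_nonneg)

lemma nn_integral_D_h_power_Q_le:
  assumes "1 \<le> t"
  shows "(\<integral>\<^sup>+ s. ennreal (indicator {1..t} s * D s * h s ^ j * Q k s) \<partial>lborel) \<le> ennreal (N (k + j + 1) t)"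
proof -
  have "(\<integral>\<^sup>+ s. ennreal (indicator {1..t} s * D s * h s ^ j * Q k s) \<partial>lborel)
      = (\<integral>\<^sup>+ r. ennreal (N k r / r\<^sup>2)
          * (\<integral>\<^sup>+ s. ennreal (indicator {1..t} s * D s * h s ^ j * indicator {..r} s) \<partial>lborel) \<partial>lborel)"
    by (rule nn_integral_mult_Q) (use assms D_nonneg h_nonneg in \<open>auto simp: indicator_def\<close>)
  also have "\<dots> = (\<integral>\<^sup>+ r. ennreal (N k r / r\<^sup>2) * ennreal (N j (min r t)) \<partial>lborel)"
    unfolding nn_integral_D_h_power_upto_min ..
  also have "\<dots> \<le> (\<integral>\<^sup>+ r. ennreal (indicator {1..t} r / r\<^sup>2 * N 0 r * N (k + j) r)
                          + ennreal (indicator {t<..} r / r\<^sup>2 * N k r) * ennreal (N j t) \<partial>lborel)"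
  proof (rule nn_integral_mono)
    fix r
    have "N k r / r\<^sup>2 * N j (min r t)
        \<le> indicator {1..t} r / r\<^sup>2 * N 0 r * N (k + j) r + indicator {t<..} r / r\<^sup>2 * N k r * N j t"
      using divide_right_mono[OF N_mult_N_min_le[of k r j t], of "r\<^sup>2"] by (simp add: add_divide_distrib)
    then show "ennreal (N k r / r\<^sup>2) * ennreal (N j (min r t))
        \<le> ennreal (indicator {1..t} r / r\<^sup>2 * N 0 r * N (k + j) r)
          + ennreal (indicator {t<..} r / r\<^sup>2 * N k r) * ennreal (N j t)"
      using N_nonneg by (simp add: ennreal_mult[symmetric] ennreal_plus[symmetric] ennreal_leI del: ennreal_plus)
  qed
  also have "\<dots> = (\<integral>\<^sup>+ r. ennreal (indicator {1..t} r / r\<^sup>2 * N 0 r * N (k + j) r) \<partial>lborel)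
      + (\<integral>\<^sup>+ r. ennreal (indicator {t<..} r / r\<^sup>2 * N k r) \<partial>lborel) * ennreal (N j t)"
    by (subst nn_integral_add) (auto simp: nn_integral_multc)
  also have "\<dots> = ennreal (N (k + j + 1) t - h t * N (k + j) t) + ennreal (Q k t) * ennreal (N j t)"
    using nn_integral_N0_N_over_square_upto[OF assms, of "k + j"]
      nn_integral_N_over_square_greaterThan[of t k] assms
    by simp
  also have "\<dots> = ennreal (N (k + j + 1) t - h t * N (k + j) t + N j t * Q k t)"
    using h_mult_N_le[of t "k + j"] N_nonneg Q_nonneg
    by (simp add: ennreal_mult[symmetric] ennreal_plus[symmetric] mult.commute del: ennreal_plus)
  also have "\<dots> \<le> ennreal (N (k + j + 1) t)"
    using N_mult_Q_le[OF assms, of j k] by (intro ennreal_leI) (simp add: add.commute)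
  finally show ?thesis .
qed

lemma set_integral_d_mult_eq:
  assumes "A \<subseteq> {1..}" "A \<in> sets borel" and [measurable]: "X \<in> borel_measurable borel"
    and X_nonneg: "\<And>s. 0 \<le> X s"
  shows "(LBINT s:A. d s * X s) = enn2real (\<integral>\<^sup>+ s. ennreal (indicator A s * D s * X s) \<partial>lborel)"
proof -
  have "(LBINT s:A. d s * X s) = (\<integral> s. indicator A s * D s * X s \<partial>lborel)"
    unfolding set_lebesgue_integral_def
    by (rule Bochner_Integration.integral_cong) (use assms in \<open>auto simp: indicator_def D_def\<close>)
  also have "\<dots> = enn2real (\<integral>\<^sup>+ s. ennreal (indicator A s * D s * X s) \<partial>lborel)"
    by (rule integral_eq_nn_integral) (use assms D_nonneg X_nonneg in auto)
  finally show ?thesis .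
qed

lemma N_0_diff_eq_set_integral:
  assumes "1 \<le> a" "a \<le> b"
  shows "N 0 b - N 0 a = (LBINT s:{a..b}. d s)"
proof -
  have "(LBINT s:{a..b}. d s * 1) = enn2real (\<integral>\<^sup>+ s. ennreal (indicator {a..b} s * D s * 1) \<partial>lborel)"
    by (rule set_integral_d_mult_eq) (use assms in auto)
  also have "\<dots> = N 0 b - N 0 a"
    using N_diff_eq_nn_integral[OF assms(2), of 0] N_mono[OF assms(2), of 0] by simp
  finally show ?thesis by simp
qed

lemma set_integral_Icc_d_mult_le:
  assumes "1 \<le> a" "a \<le> b" and [measurable]: "X \<in> borel_measurable borel"
    and X_nonneg: "\<And>s. 0 \<le> X s" and X_le: "\<And>s. a \<le> s \<Longrightarrow> s \<le> b \<Longrightarrow> X s \<le> C"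
  shows "(LBINT s:{a..b}. d s * X s) \<le> C * (N 0 b - N 0 a)"
proof -
  have "0 \<le> C" using order_trans[OF X_nonneg X_le[OF order_refl \<open>a \<le> b\<close>]] .
  have "(LBINT s:{a..b}. d s * X s) = enn2real (\<integral>\<^sup>+ s. ennreal (indicator {a..b} s * D s * X s) \<partial>lborel)"
    by (rule set_integral_d_mult_eq) (use assms in auto)
  also have "\<dots> \<le> C * (N 0 b - N 0 a)"
    using \<open>0 \<le> C\<close> N_mono[OF \<open>a \<le> b\<close>, of 0] nn_integral_Icc_D_mult_le[OF \<open>a \<le> b\<close> _ X_nonneg X_le]
    by (intro enn2real_leI) auto
  finally show ?thesis .
qed

text \<open>Without \<open>cond_star d m\<close> the integral may be infinite, and then \<open>PP d m t = 0\<close>.\<close>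
lemma PP_eq_nn_integral:
  assumes "cond_star d m"
  shows "ennreal (PP d m t) = (\<integral>\<^sup>+ u. ennreal (h (max t u) * D u * h u ^ m) \<partial>lborel)"
proof -
  have "(\<integral>\<^sup>+ u. ennreal (h (max t u) * D u * h u ^ m) \<partial>lborel)
      \<le> (\<integral>\<^sup>+ s\<in>{1..}. ennreal (d s * h s ^ Suc m) \<partial>lborel)"
  proof (rule nn_integral_mono)
    fix u
    show "ennreal (h (max t u) * D u * h u ^ m) \<le> ennreal (d u * h u ^ Suc m) * indicator {1..} u"
    proof (cases "1 \<le> u")
      case True
      have "h (max t u) * (D u * h u ^ m) \<le> h u * (D u * h u ^ m)"
        using h_antimono[of u "max t u"] D_nonneg h_nonneg by (intro mult_right_mono) auto
      then show ?thesis using True by (auto simp: D_def mult_ac intro!: ennreal_leI)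
    qed (simp add: D_eq_0_below_1)
  qed
  also have "\<dots> < \<infinity>" using assms unfolding cond_star_def .
  finally have "(\<integral>\<^sup>+ u. ennreal (h (max t u) * D u * h u ^ m) \<partial>lborel) < \<infinity>" .
  moreover have "(\<integral>\<^sup>+ s\<in>{1..}. ennreal (h (max t s) * d s * h s ^ m) \<partial>lborel)
      = (\<integral>\<^sup>+ u. ennreal (h (max t u) * D u * h u ^ m) \<partial>lborel)"
    by (rule nn_integral_cong) (auto simp: D_def indicator_def)
  ultimately show ?thesis
    unfolding PP_def by (simp add: ennreal_enn2real_if less_top)
qed

lemma set_nn_integral_N_over_square:
  assumes "0 < t"
  shows "(\<integral>\<^sup>+ s\<in>{t..}. ennreal (N m s / s\<^sup>2) \<partial>lborel) = ennreal (Q m t)"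
  unfolding nn_integral_N_over_square[OF assms, symmetric]
  by (rule nn_integral_cong) (auto simp: indicator_def)

lemma set_integral_N0_N_over_square:
  assumes "1 \<le> t"
  shows "(LBINT s:{1..t}. N 0 s * N m s / s\<^sup>2) = N (Suc m) t - h t * N m t"
proof -
  have "(LBINT s:{1..t}. N 0 s * N m s / s\<^sup>2) = (\<integral> s. indicator {1..t} s / s\<^sup>2 * N 0 s * N m s \<partial>lborel)"
    unfolding set_lebesgue_integral_def
    by (rule Bochner_Integration.integral_cong) (auto simp: indicator_def)
  also have "\<dots> = enn2real (\<integral>\<^sup>+ s. ennreal (indicator {1..t} s / s\<^sup>2 * N 0 s * N m s) \<partial>lborel)"
    by (rule integral_eq_nn_integral) (auto simp: N_nonneg)
  also have "\<dots> = N (Suc m) t - h t * N m t"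
    unfolding nn_integral_N0_N_over_square_upto[OF assms] using h_mult_N_le[of t m] by simp
  finally show ?thesis .
qed

lemma set_nn_integral_N0_N_over_square_eq_PP:
  assumes "cond_star d m" "1 \<le> t"
  shows "(\<integral>\<^sup>+ s\<in>{t..}. ennreal (N 0 s * N m s / s\<^sup>2) \<partial>lborel) = ennreal (PP d m t)"
proof -
  have "(\<integral>\<^sup>+ s\<in>{t..}. ennreal (N 0 s * N m s / s\<^sup>2) \<partial>lborel)
      = (\<integral>\<^sup>+ s. ennreal (indicator {t..} s / s\<^sup>2 * N 0 s * N m s) \<partial>lborel)"
    by (rule nn_integral_cong) (auto simp: indicator_def)
  then show ?thesis
    unfolding nn_integral_N0_N_over_square_from[OF assms(2)] PP_eq_nn_integral[OF assms(1)] .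
qed

lemma set_nn_integral_d_h_Q_pred_le:
  assumes "1 \<le> t"
  shows "(\<integral>\<^sup>+ s\<in>{t..}. ennreal (d s * h s * QQ d (int m - 1) s) \<partial>lborel)
       \<le> (\<integral>\<^sup>+ s\<in>{t..}. ennreal (d s * Q m s) \<partial>lborel)"
proof (cases m)
  case 0
  then show ?thesis unfolding QQ_int_minus_1 by (simp add: Q_0)
next
  case (Suc k)
  have from_D: "(\<integral>\<^sup>+ s. ennreal (indicator {t..} s * D s * X s) \<partial>lborel)
      = (\<integral>\<^sup>+ s\<in>{t..}. ennreal (d s * X s) \<partial>lborel)" for X
    using assms by (intro nn_integral_cong) (auto simp: indicator_def D_def)
  have "(\<integral>\<^sup>+ s\<in>{t..}. ennreal (d s * h s * QQ d (int m - 1) s) \<partial>lborel)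
      = (\<integral>\<^sup>+ s. ennreal (indicator {t..} s * D s * h s ^ 1 * Q k s) \<partial>lborel)"
    unfolding QQ_int_minus_1 using from_D[of "\<lambda>s. h s * Q k s"] by (simp add: Suc mult.assoc)
  also have "\<dots> = (\<integral>\<^sup>+ r. ennreal (N k r / r\<^sup>2)
      * (\<integral>\<^sup>+ s. ennreal (indicator {t..} s * D s * h s ^ 1 * indicator {..r} s) \<partial>lborel) \<partial>lborel)"
    by (rule nn_integral_mult_Q) (use assms D_nonneg h_nonneg in \<open>auto simp: indicator_def\<close>)
  also have "\<dots> = (\<integral>\<^sup>+ r. ennreal (N k r / r\<^sup>2) * ennreal (indicator {t..} r * (N 1 r - N 1 t)) \<partial>lborel)"
    unfolding nn_integral_D_h_power_between ..
  also have "\<dots> \<le> (\<integral>\<^sup>+ r. ennreal (N (k + 1) r / r\<^sup>2) * ennreal (indicator {t..} r * (N 0 r - N 0 t)) \<partial>lborel)"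
  proof (rule nn_integral_mono)
    fix r
    show "ennreal (N k r / r\<^sup>2) * ennreal (indicator {t..} r * (N 1 r - N 1 t))
        \<le> ennreal (N (k + 1) r / r\<^sup>2) * ennreal (indicator {t..} r * (N 0 r - N 0 t))"
    proof (cases "t \<le> r")
      case True
      have "N k r * (N 1 r - N 1 t) / r\<^sup>2 \<le> N (k + 1) r * (N 0 r - N 0 t) / r\<^sup>2"
        using N_mult_N_1_diff_le[OF True, of k] by (intro divide_right_mono) auto
      then show ?thesis
        using True N_nonneg N_mono[OF True] by (simp add: ennreal_mult[symmetric] ennreal_leI)
    qed simp
  qed
  also have "\<dots> = (\<integral>\<^sup>+ r. ennreal (N (k + 1) r / r\<^sup>2)
      * (\<integral>\<^sup>+ s. ennreal (indicator {t..} s * D s * h s ^ 0 * indicator {..r} s) \<partial>lborel) \<partial>lborel)"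
    unfolding nn_integral_D_h_power_between ..
  also have "\<dots> = (\<integral>\<^sup>+ s. ennreal (indicator {t..} s * D s * h s ^ 0 * Q (k + 1) s) \<partial>lborel)"
    by (rule nn_integral_mult_Q[symmetric]) (use assms D_nonneg h_nonneg in \<open>auto simp: indicator_def\<close>)
  also have "\<dots> = (\<integral>\<^sup>+ s\<in>{t..}. ennreal (d s * Q m s) \<partial>lborel)"
    using from_D[of "Q m"] by (simp add: Suc)
  finally show ?thesis .
qed

lemma set_nn_integral_d_Q_le_PP:
  assumes "cond_star d m" "1 \<le> t"
  shows "(\<integral>\<^sup>+ s\<in>{t..}. ennreal (d s * Q m s) \<partial>lborel) \<le> ennreal (PP d m t)"
proof -
  have "(\<integral>\<^sup>+ s\<in>{t..}. ennreal (d s * Q m s) \<partial>lborel)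
      = (\<integral>\<^sup>+ s. ennreal (indicator {t..} s * D s * h s ^ 0 * Q m s) \<partial>lborel)"
    using assms(2) by (intro nn_integral_cong) (auto simp: indicator_def D_def)
  also have "\<dots> = (\<integral>\<^sup>+ r. ennreal (N m r / r\<^sup>2)
      * (\<integral>\<^sup>+ s. ennreal (indicator {t..} s * D s * h s ^ 0 * indicator {..r} s) \<partial>lborel) \<partial>lborel)"
    by (rule nn_integral_mult_Q) (use assms D_nonneg h_nonneg in \<open>auto simp: indicator_def\<close>)
  also have "\<dots> = (\<integral>\<^sup>+ r. ennreal (N m r / r\<^sup>2) * ennreal (indicator {t..} r * (N 0 r - N 0 t)) \<partial>lborel)"
    unfolding nn_integral_D_h_power_between ..
  also have "\<dots> \<le> (\<integral>\<^sup>+ s. ennreal (indicator {t..} s / s\<^sup>2 * N 0 s * N m s) \<partial>lborel)"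
  proof (rule nn_integral_mono)
    fix r
    show "ennreal (N m r / r\<^sup>2) * ennreal (indicator {t..} r * (N 0 r - N 0 t))
        \<le> ennreal (indicator {t..} r / r\<^sup>2 * N 0 r * N m r)"
    proof (cases "t \<le> r")
      case True
      have "N m r * (N 0 r - N 0 t) / r\<^sup>2 \<le> N m r * N 0 r / r\<^sup>2"
        using N_nonneg[of 0 t] N_nonneg[of m r] by (intro divide_right_mono mult_left_mono) auto
      then show ?thesis
        using True N_nonneg N_mono[OF True] by (simp add: ennreal_mult[symmetric] ennreal_leI mult_ac)
    qed simp
  qed
  also have "\<dots> = ennreal (PP d m t)"
    unfolding nn_integral_N0_N_over_square_from[OF assms(2)] PP_eq_nn_integral[OF assms(1)] ..
  finally show ?thesis .
qed

lemma set_integral_d_h_power_Q_le_N: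
  assumes "1 \<le> t"
  shows "(LBINT s:{1..t}. d s * (h s ^ j * Q k s)) \<le> N (k + j + 1) t"
proof -
  have "(LBINT s:{1..t}. d s * (h s ^ j * Q k s))
      = enn2real (\<integral>\<^sup>+ s. ennreal (indicator {1..t} s * D s * (h s ^ j * Q k s)) \<partial>lborel)"
    by (rule set_integral_d_mult_eq) (auto simp: h_nonneg Q_nonneg)
  also have "\<dots> \<le> N (k + j + 1) t"
    using nn_integral_D_h_power_Q_le[OF assms, of j k]
    by (intro enn2real_leI N_nonneg) (simp only: mult.assoc)
  finally show ?thesis .
qed

lemma set_integral_d_Q_le_N:
  assumes "1 \<le> t"
  shows "(LBINT s:{1..t}. d s * Q m s) \<le> N (Suc m) t"
  using set_integral_d_h_power_Q_le_N[OF assms, of 0 m] by simp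

lemma set_integral_d_h_Q_pred_le_N:
  assumes "1 \<le> t"
  shows "(LBINT s:{1..t}. d s * h s * QQ d (int m - 1) s) \<le> N (Suc m) t"
proof (cases m)
  case 0
  then show ?thesis unfolding QQ_int_minus_1 by (simp add: NN_def)
next
  case (Suc k)
  then show ?thesis
    using set_integral_d_h_power_Q_le_N[OF assms, of 1 k] unfolding QQ_int_minus_1 by (simp add: mult.assoc)
qed

lemma set_integral_d_Q_le:
  assumes "1 \<le> a" "a \<le> b"
  shows "(LBINT s:{a..b}. d s * Q m s) \<le> Q m a * (N 0 b - N 0 a)"
  by (rule set_integral_Icc_d_mult_le[OF assms]) (auto simp: Q_nonneg intro: Q_antimono)

lemma set_integral_d_h_Q_pred_le:
  assumes "1 \<le> a" "a \<le> b"
  shows "(LBINT s:{a..b}. d s * h s * QQ d (int m - 1) s) \<le> 2 * Q m a * (N 0 b - N 0 a)"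
proof -
  have h_Q_pred_le: "h s * QQ d (int m - 1) s \<le> 2 * Q m s" if "1 \<le> s" for s
    unfolding QQ_int_minus_1 using h_mult_Q_le[OF that, of "m - 1"] h_nonneg[of s]
    by (cases m) (auto simp: Q_0)
  have "(LBINT s:{a..b}. d s * (h s * QQ d (int m - 1) s)) \<le> (2 * Q m a) * (N 0 b - N 0 a)"
  proof (rule set_integral_Icc_d_mult_le[OF assms])
    show "(\<lambda>s. h s * QQ d (int m - 1) s) \<in> borel_measurable borel"
      unfolding QQ_int_minus_1 by (cases m) auto
    show "0 \<le> h s * QQ d (int m - 1) s" for s
      unfolding QQ_int_minus_1 using h_nonneg[of s] Q_nonneg by simp
    fix s assume "a \<le> s" "s \<le> b"
    then show "h s * QQ d (int m - 1) s \<le> 2 * Q m a"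
      using h_Q_pred_le[of s] Q_antimono[of a s m] assms by simp
  qed
  then show ?thesis by (simp add: mult.assoc)
qed

end

theorem lemma3p8:
  fixes h0 h0' :: "real \<Rightarrow> real" and i j m :: nat and a b t :: real
  assumes deriv: "\<And>x. x \<ge> 1 \<Longrightarrow> (h0 has_real_derivative h0' x) (at x within {1..})"
    and cont: "continuous_on {1..} h0'"
    and pos: "\<And>x. x \<ge> 1 \<Longrightarrow> h0 x > 0"
    and mono: "\<And>x. x \<ge> 1 \<Longrightarrow> h0' x \<ge> 0"
    and L1a: "set_integrable lborel {1..} (\<lambda>x. h0 x / x\<^sup>2)"
    and L1b: "set_integrable lborel {1..} (\<lambda>x. h0' x / x)"
    and ab: "1 \<le> a" "a \<le> b"
    and t: "1 \<le> t"
  shows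
    "((\<integral>\<^sup>+ s\<in>{t..}. ennreal (NN h0' m s / s\<^sup>2) \<partial>lborel) = ennreal (QQ h0' (int m) t))
   \<and> ((LBINT s:{1..t}. NN h0' 0 s * NN h0' m s / s\<^sup>2)
       = NN h0' (Suc m) t - hh h0' t * NN h0' m t)
   \<and> (NN h0' (Suc m) t - hh h0' t * NN h0' m t \<le> NN h0' (Suc m) t)
   \<and> (cond_star h0' m \<longrightarrow>
       (\<integral>\<^sup>+ s\<in>{t..}. ennreal (NN h0' 0 s * NN h0' m s / s\<^sup>2) \<partial>lborel) = ennreal (PP h0' m t))
   \<and> (NN h0' i t * NN h0' j t \<le> NN h0' 0 t * NN h0' (i + j) t)
   \<and> (NN h0' i t * QQ h0' (int j) t \<le> hh h0' t * NN h0' (i + j) t)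
   \<and> (hh h0' t * NN h0' (i + j) t \<le> NN h0' (i + j + 1) t)
   \<and> (QQ h0' (int i) t * QQ h0' (int j) t \<le> hh h0' t * QQ h0' (int (i + j)) t)
   \<and> (hh h0' t * QQ h0' (int (i + j)) t \<le> 2 * QQ h0' (int (i + j + 1)) t)
   \<and> ((\<integral>\<^sup>+ s\<in>{t..}. ennreal (h0' s * hh h0' s * QQ h0' (int m - 1) s) \<partial>lborel)
       \<le> (\<integral>\<^sup>+ s\<in>{t..}. ennreal (h0' s * QQ h0' (int m) s) \<partial>lborel))
   \<and> (cond_star h0' m \<longrightarrow>
       (\<integral>\<^sup>+ s\<in>{t..}. ennreal (h0' s * QQ h0' (int m) s) \<partial>lborel) \<le> ennreal (PP h0' m t))
   \<and> ((LBINT s:{1..t}. h0' s * hh h0' s * QQ h0' (int m - 1) s) \<le> NN h0' (Suc m) t)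
   \<and> ((LBINT s:{1..t}. h0' s * QQ h0' (int m) s) \<le> NN h0' (Suc m) t)
   \<and> ((LBINT s:{a..b}. h0' s * QQ h0' (int m) s) \<le> QQ h0' (int m) a * (h0 b - h0 a))
   \<and> ((LBINT s:{a..b}. h0' s * hh h0' s * QQ h0' (int m - 1) s) \<le> 2 * QQ h0' (int m) a * (h0 b - h0 a))"
proof -
  interpret ray_weight h0'
    using mono L1b by unfold_locales auto
  have "h0 b - h0 a = (LBINT s:{a..b}. h0' s)"
    using ab by (intro set_integral_derivative_Icc[symmetric, where S="{1..}"]) (auto simp: deriv cont)
  then have h0_diff: "h0 b - h0 a = NN h0' 0 b - NN h0' 0 a"
    using N_0_diff_eq_set_integral[OF ab] by simp
  have "0 < t" and N_Suc_bound: "NN h0' (Suc m) t - hh h0' t * NN h0' m t \<le> NN h0' (Suc m) t"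
    using t h_nonneg[of t] N_nonneg[of m t] by auto
  show ?thesis
    unfolding h0_diff
    using set_nn_integral_N_over_square[OF \<open>0 < t\<close>, of m]
      set_integral_N0_N_over_square[OF t, of m] N_Suc_bound
      set_nn_integral_N0_N_over_square_eq_PP[OF _ t, of m]
      N_mult_N_le[of i t j] N_mult_Q_le[OF t, of i j] h_mult_N_le[of t "i + j"]
      Q_mult_Q_le[of i t j] h_mult_Q_le[OF t, of "i + j"]
      set_nn_integral_d_h_Q_pred_le[OF t, of m] set_nn_integral_d_Q_le_PP[OF _ t, of m]
      set_integral_d_h_Q_pred_le_N[OF t, of m] set_integral_d_Q_le_N[OF t, of m]
      set_integral_d_Q_le[OF ab, of m] set_integral_d_h_Q_pred_le[OF ab, of m]
    by blast
qed

end
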